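(* Let $Q$ be a nonrecursive connected query, let $a$ be the maximum radius of a rule of $\Pi_Q$, and let $\mathbf T$ be the set of time points occurring in $\Pi_Q$. Let $\tau_a$ be a time point and let $\tau_0$ be the maximum of $\tau_a$ and the elements of $\mathbf T$. For every dataset $D'$, predicate $P$, tuple of objects $\vec o$ and time point $\tau\le\tau_0+a\cdot(\mathrm{rank}(\Pi_Q)-\mathrm{rank}(P))$: if $\Pi_Q\cup D'\models P(\vec o,\tau)$, then $\Pi_Q\cup D''\models P(\vec o,\tau)$, where $D''$ consists of the rigid facts of $D'$ and the temporal facts of $D'$ whose time argument $\tau'$ satisfies $\tau'\le\tau_0+\mathrm{rad}(\Pi_Q)$.
   Context: Temporal Datalog. Constants are partitioned into objects and integer time points; variables into object variables and time variables. A time term is a time point, a time variable, or an expression $t+k$ with $t$ a time variable and $k\in\mathbb{Z}$. Each predicate is either extensional (EDB) or intensional (IDB) and has an arity $n\ge0$, each position being of object sort or time sort; a predicate is rigid if all its positions are of object sort, and temporal if its last position is of time sort and all others are of object sort. An atom $P(t_1,\dots,t_n)$ has terms of the required sorts. A rule is $\bigwedge_i\alpha_i\to\alpha$ with $\alpha$ and all $\alpha_i$ rigid or temporal atoms, $\alpha$ IDB whenever the body is nonempty, and every head variable occurring in the body. A program is a finite set of rules. A fact is a ground rigid or temporal atom without $+$ (identified with the rule $\top\to\alpha$); a dataset is a finite set of EDB facts. Rules are read as universally quantified first-order sentences with $+$ interpreted as integer addition; $\Pi\models\alpha$ denotes entailment. A query is $Q=\langle P_Q,\Pi_Q\rangle$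 with $\Pi_Q$ a program and $P_Q$ an IDB predicate of $\Pi_Q$. Predicate $P$ depends on $P'$ in $\Pi$ if some rule of $\Pi$ has $P$ in the head and $P'$ in the body; $\Pi$ (or a query with program $\Pi$) is nonrecursive if the graph of this dependency relation is acyclic. $\mathrm{rank}(P)=\mathrm{rank}(P,\Pi_Q)$ is $0$ if $P$ does not occur in a rule head of $\Pi_Q$, and otherwise the maximum of $\mathrm{rank}(P')+1$ over predicates $P'$ on which $P$ depends; $\mathrm{rank}(\Pi_Q)$ is the maximum rank of a predicate of $\Pi_Q$. A rule is connected if it contains at most one time variable and, if a time variable occurs in the body, it also occurs in the head; a query is connected if all its rules are. For a time term $s$, $\Delta(s)=k$ if $s=t+k$ with $t$ a variable, and $\Delta(s)=0$ otherwise. The radius of a connected rule $r$ mentioning a time variable is the maximum of $|\Delta(s)-\Delta(s')|$ where $s$ is the time argument of the head and $s'$ the time argument of a body atom of $r$. The radius $\mathrm{rad}(\Pi)$ of a connected program is the number of rules of $\Pi$ times the maximum radius of a rule of $\Pi$. *)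

theory Defs
  imports Main
begin

datatype sort = SObj | STime

text \<open>Terms: object constants, object variables, time points, time variables,
  and time expressions t+k (t a time variable, k an integer).
  Object variables and time variables live in separate namespaces (constructors).\<close>
datatype ('o,'v) tm = OC 'o | OV 'v | TC int | TV 'v | TVP 'v int

datatype ('p,'o,'v) atom = Atom (pred: 'p) (args: "('o,'v) tm list")

datatype ('p,'o,'v) rule = Rule (body: "('p,'o,'v) atom list") (head: "('p,'o,'v) atom")

datatype 'o val = VO 'o | VT int

type_synonym ('p,'o) gatom = "'p \<times> 'o val list"

fun tm_sort :: "('o,'v) tm \<Rightarrow> sort" where
  "tm_sort (OC _) = SObj"
| "tm_sort (OV _) = SObj"
| "tm_sort (TC _) = STime"
| "tm_sort (TV _) = STime"
| "tm_sort (TVP _ _) = STime"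

fun val_sort :: "'o val \<Rightarrow> sort" where
  "val_sort (VO _) = SObj"
| "val_sort (VT _) = STime"

text \<open>A signature is given by srt (arity and sorts of positions)
  and idb (IDB vs. EDB).\<close>

definition rigid :: "('p \<Rightarrow> sort list) \<Rightarrow> 'p \<Rightarrow> bool" where
  "rigid srt p = (\<forall>s\<in>set (srt p). s = SObj)"

definition temporal :: "('p \<Rightarrow> sort list) \<Rightarrow> 'p \<Rightarrow> bool" where
  "temporal srt p = (srt p \<noteq> [] \<and> last (srt p) = STime \<and> (\<forall>s\<in>set (butlast (srt p)). s = SObj))"

definition wf_atom :: "('p \<Rightarrow> sort list) \<Rightarrow> ('p,'o,'v) atom \<Rightarrow> bool" where
  "wf_atom srt a = (map tm_sort (args a) = srt (pred a) \<and> (rigid srt (pred a) \<or> temporal srt (pred a)))"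

fun tvars_tm :: "('o,'v) tm \<Rightarrow> 'v set" where
  "tvars_tm (TV v) = {v}"
| "tvars_tm (TVP v _) = {v}"
| "tvars_tm _ = {}"

fun ovars_tm :: "('o,'v) tm \<Rightarrow> 'v set" where
  "ovars_tm (OV v) = {v}"
| "ovars_tm _ = {}"

definition tvars_atom :: "('p,'o,'v) atom \<Rightarrow> 'v set" where
  "tvars_atom a = (\<Union>t\<in>set (args a). tvars_tm t)"

definition ovars_atom :: "('p,'o,'v) atom \<Rightarrow> 'v set" where
  "ovars_atom a = (\<Union>t\<in>set (args a). ovars_tm t)"

definition atoms_rule :: "('p,'o,'v) rule \<Rightarrow> ('p,'o,'v) atom set" where
  "atoms_rule r = insert (head r) (set (body r))"

definition tvars_rule :: "('p,'o,'v) rule \<Rightarrow> 'v set" where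
  "tvars_rule r = (\<Union>a\<in>atoms_rule r. tvars_atom a)"

definition wf_rule :: "('p \<Rightarrow> sort list) \<Rightarrow> ('p \<Rightarrow> bool) \<Rightarrow> ('p,'o,'v) rule \<Rightarrow> bool" where
  "wf_rule srt idb r =
     ((\<forall>a\<in>atoms_rule r. wf_atom srt a)
      \<and> (body r \<noteq> [] \<longrightarrow> idb (pred (head r)))
      \<and> ovars_atom (head r) \<subseteq> (\<Union>b\<in>set (body r). ovars_atom b)
      \<and> tvars_atom (head r) \<subseteq> (\<Union>b\<in>set (body r). tvars_atom b))"

definition program :: "('p \<Rightarrow> sort list) \<Rightarrow> ('p \<Rightarrow> bool) \<Rightarrow> ('p,'o,'v) rule set \<Rightarrow> bool" where
  "program srt idb \<Pi> = (finite \<Pi> \<and> (\<forall>r\<in>\<Pi>. wf_rule srt idb r))"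

definition fact :: "('p \<Rightarrow> sort list) \<Rightarrow> ('p,'o) gatom \<Rightarrow> bool" where
  "fact srt f = (map val_sort (snd f) = srt (fst f) \<and> (rigid srt (fst f) \<or> temporal srt (fst f)))"

definition dataset :: "('p \<Rightarrow> sort list) \<Rightarrow> ('p \<Rightarrow> bool) \<Rightarrow> ('p,'o) gatom set \<Rightarrow> bool" where
  "dataset srt idb D = (finite D \<and> (\<forall>f\<in>D. fact srt f \<and> \<not> idb (fst f)))"

definition preds :: "('p,'o,'v) rule set \<Rightarrow> 'p set" where
  "preds \<Pi> = {pred a | a r. r \<in> \<Pi> \<and> a \<in> atoms_rule r}"

definition query :: "('p \<Rightarrow> sort list) \<Rightarrow> ('p \<Rightarrow> bool) \<Rightarrow> 'p \<Rightarrow> ('p,'o,'v) rule set \<Rightarrow> bool" where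
  "query srt idb PQ \<Pi> = (program srt idb \<Pi> \<and> PQ \<in> preds \<Pi> \<and> idb PQ)"

fun eval_tm :: "('v \<Rightarrow> 'o) \<Rightarrow> ('v \<Rightarrow> int) \<Rightarrow> ('o,'v) tm \<Rightarrow> 'o val" where
  "eval_tm vo vt (OC c) = VO c"
| "eval_tm vo vt (OV v) = VO (vo v)"
| "eval_tm vo vt (TC i) = VT i"
| "eval_tm vo vt (TV v) = VT (vt v)"
| "eval_tm vo vt (TVP v k) = VT (vt v + k)"

definition eval_atom :: "('v \<Rightarrow> 'o) \<Rightarrow> ('v \<Rightarrow> int) \<Rightarrow> ('p,'o,'v) atom \<Rightarrow> ('p,'o) gatom" where
  "eval_atom vo vt a = (pred a, map (eval_tm vo vt) (args a))"

definition sat_rule :: "('p,'o) gatom set \<Rightarrow> ('p,'o,'v) rule \<Rightarrow> bool" where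
  "sat_rule I r = (\<forall>vo vt. (\<forall>b\<in>set (body r). eval_atom vo vt b \<in> I) \<longrightarrow> eval_atom vo vt (head r) \<in> I)"

definition entails :: "('p,'o,'v) rule set \<Rightarrow> ('p,'o) gatom set \<Rightarrow> ('p,'o) gatom \<Rightarrow> bool" where
  "entails \<Pi> D \<alpha> = (\<forall>I. (\<forall>r\<in>\<Pi>. sat_rule I r) \<longrightarrow> D \<subseteq> I \<longrightarrow> \<alpha> \<in> I)"

definition deps :: "('p,'o,'v) rule set \<Rightarrow> ('p \<times> 'p) set" where
  "deps \<Pi> = {(pred (head r), pred b) | r b. r \<in> \<Pi> \<and> b \<in> set (body r)}"

definition nonrecursive :: "('p,'o,'v) rule set \<Rightarrow> bool" where
  "nonrecursive \<Pi> = acyclic (deps \<Pi>)"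

text \<open>rank(P): length of a longest dependency chain starting at P (for nonrecursive programs this
  is the unique solution of rank(P) = 0 if P heads no rule, else max (rank(P')+1) over dependencies).\<close>
definition rank :: "('p,'o,'v) rule set \<Rightarrow> 'p \<Rightarrow> nat" where
  "rank \<Pi> P = Max {n. \<exists>f. f 0 = P \<and> (\<forall>i<n. (f i, f (Suc i)) \<in> deps \<Pi>)}"

definition rank_prog :: "('p,'o,'v) rule set \<Rightarrow> nat" where
  "rank_prog \<Pi> = Max (rank \<Pi> ` preds \<Pi>)"

definition connected_rule :: "('p,'o,'v) rule \<Rightarrow> bool" where
  "connected_rule r = (card (tvars_rule r) \<le> 1
      \<and> (\<Union>b\<in>set (body r). tvars_atom b) \<subseteq> tvars_atom (head r))"

fun delta :: "('o,'v) tm \<Rightarrow> int" where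
  "delta (TVP _ k) = k"
| "delta _ = 0"

definition has_time :: "('p,'o,'v) atom \<Rightarrow> bool" where
  "has_time a = (args a \<noteq> [] \<and> tm_sort (last (args a)) = STime)"

definition rule_radius :: "('p,'o,'v) rule \<Rightarrow> nat" where
  "rule_radius r = (if tvars_rule r = {} then 0 else
     Max (insert 0 {nat \<bar>delta (last (args (head r))) - delta (last (args b))\<bar> | b. b \<in> set (body r) \<and> has_time b}))"

definition max_radius :: "('p,'o,'v) rule set \<Rightarrow> nat" where
  "max_radius \<Pi> = Max (insert 0 (rule_radius ` \<Pi>))"

definition rad :: "('p,'o,'v) rule set \<Rightarrow> nat" where
  "rad \<Pi> = card \<Pi> * max_radius \<Pi>"

definition time_points :: "('p,'o,'v) rule set \<Rightarrow> int set" where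
  "time_points \<Pi> = {i. \<exists>r\<in>\<Pi>. \<exists>a\<in>atoms_rule r. TC i \<in> set (args a)}"

definition restrict_ds :: "('p \<Rightarrow> sort list) \<Rightarrow> ('p,'o) gatom set \<Rightarrow> int \<Rightarrow> ('p,'o) gatom set" where
  "restrict_ds srt D bound = {f \<in> D. rigid srt (fst f)
      \<or> (temporal srt (fst f) \<and> (\<exists>t'. last (snd f) = VT t' \<and> t' \<le> bound))}"

end

theory Submission
  imports Defs
begin

text \<open>Give every predicate \<open>P\<close> the time bound \<open>\<beta> P = \<tau>\<^sub>0 + a \<cdot> (rank(\<Pi>) - rank(P))\<close>,
  where \<open>a\<close> is the maximal rule radius. In a connected rule the time arguments of the head and
  of a body atom differ by at most \<open>a\<close>, while the rank drops by at least one from head to body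
  (and time constants are at most \<open>\<tau>\<^sub>0\<close>); so whenever the head of a ground rule instance
  respects its bound, so do all body atoms. Hence, for any model \<open>J\<close> of \<open>\<Pi>\<close> and the restricted
  dataset, the atoms that are in \<open>J\<close> or violate their bound form a model of \<open>\<Pi>\<close> and the full
  dataset: every fact of \<open>D'\<close> respecting its bound has time argument at most
  \<open>\<tau>\<^sub>0 + a \<cdot> |\<Pi>| = \<tau>\<^sub>0 + rad(\<Pi>)\<close>, because ranks are bounded by the number of rules.\<close>

definition dep_chain_lengths :: "('p,'o,'v) rule set \<Rightarrow> 'p \<Rightarrow> nat set" where
  "dep_chain_lengths \<Pi> P = {n. \<exists>f. f 0 = P \<and> (\<forall>i<n. (f i, f (Suc i)) \<in> deps \<Pi>)}"

lemma rank_eq_Max_dep_chain_lengths: "rank \<Pi> P = Max (dep_chain_lengths \<Pi> P)"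
  unfolding rank_def dep_chain_lengths_def ..

lemma chain_in_trancl:
  assumes "\<forall>i<n. (f i, f (Suc i)) \<in> r" and "i < j" and "j \<le> n"
  shows "(f i, f j) \<in> r\<^sup>+"
  using assms(2,3)
proof (induction j)
  case 0
  then show ?case by simp
next
  case (Suc j)
  have step: "(f j, f (Suc j)) \<in> r"
    using assms(1) Suc.prems(2) by simp
  show ?case
  proof (cases "i = j")
    case True
    then show ?thesis using step by simp
  next
    case False
    then have "(f i, f j) \<in> r\<^sup>+" using Suc by simp
    then show ?thesis using step by (rule trancl_into_trancl)
  qed
qed

lemma acyclic_chain_inj_on:
  assumes "acyclic r" and "\<forall>i<n. (f i, f (Suc i)) \<in> r"
  shows "inj_on f {..n}"
proof (rule linorder_inj_onI')
  fix i j assume "i \<in> {..n}" "j \<in> {..n}" "i < j"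
  then have "(f i, f j) \<in> r\<^sup>+" using chain_in_trancl[OF assms(2)] by simp
  then show "f i \<noteq> f j" using assms(1) by (auto simp: acyclic_def)
qed

text \<open>All but the last predicate of a dependency chain head a rule, and they are pairwise
  distinct, so they inject into \<open>\<Pi>\<close>.\<close>

lemma dep_chain_length_le_card:
  assumes "finite \<Pi>" and "acyclic (deps \<Pi>)" and chain: "\<forall>i<n. (f i, f (Suc i)) \<in> deps \<Pi>"
  shows "n \<le> card \<Pi>"
proof -
  have "inj_on f {..<n}"
    using acyclic_chain_inj_on[OF assms(2) chain] by (rule inj_on_subset) auto
  then have "n = card (f ` {..<n})" by (simp add: card_image)
  also have "f ` {..<n} \<subseteq> (\<lambda>r. pred (head r)) ` \<Pi>"
    using chain by (fastforce simp: deps_def)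
  then have "card (f ` {..<n}) \<le> card ((\<lambda>r. pred (head r)) ` \<Pi>)"
    using assms(1) by (intro card_mono) auto
  also have "\<dots> \<le> card \<Pi>"
    using assms(1) by (rule card_image_le)
  finally show ?thesis .
qed

lemma
  assumes "finite \<Pi>" and "acyclic (deps \<Pi>)"
  shows finite_dep_chain_lengths: "finite (dep_chain_lengths \<Pi> P)"
    and dep_chain_lengths_le_card: "n \<in> dep_chain_lengths \<Pi> P \<Longrightarrow> n \<le> card \<Pi>"
    and rank_in_dep_chain_lengths: "rank \<Pi> P \<in> dep_chain_lengths \<Pi> P"
proof -
  show le: "n \<le> card \<Pi>" if "n \<in> dep_chain_lengths \<Pi> P" for n
    using that dep_chain_length_le_card[OF assms] by (auto simp: dep_chain_lengths_def)
  then show fin: "finite (dep_chain_lengths \<Pi> P)"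
    by (meson finite_atMost finite_subset atMost_iff subsetI)
  have "0 \<in> dep_chain_lengths \<Pi> P"
    unfolding dep_chain_lengths_def by auto
  then show "rank \<Pi> P \<in> dep_chain_lengths \<Pi> P"
    unfolding rank_eq_Max_dep_chain_lengths using fin by (intro Max_in) blast+
qed

lemma rank_le_card:
  assumes "finite \<Pi>" and "acyclic (deps \<Pi>)"
  shows "rank \<Pi> P \<le> card \<Pi>"
  using dep_chain_lengths_le_card[OF assms rank_in_dep_chain_lengths[OF assms]] .

lemma rank_less_of_deps:
  assumes "finite \<Pi>" and "acyclic (deps \<Pi>)" and "(Q, Q') \<in> deps \<Pi>"
  shows "rank \<Pi> Q' < rank \<Pi> Q"
proof -
  obtain f where f: "f 0 = Q'" "\<forall>i<rank \<Pi> Q'. (f i, f (Suc i)) \<in> deps \<Pi>"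
    using rank_in_dep_chain_lengths[OF assms(1,2), of Q'] by (auto simp: dep_chain_lengths_def)
  have "\<forall>i<Suc (rank \<Pi> Q'). (case_nat Q f i, case_nat Q f (Suc i)) \<in> deps \<Pi>"
    using f assms(3) by (auto split: nat.split)
  then have "Suc (rank \<Pi> Q') \<in> dep_chain_lengths \<Pi> Q"
    unfolding dep_chain_lengths_def by (intro CollectI exI[of _ "case_nat Q f"]) simp
  then show ?thesis
    unfolding rank_eq_Max_dep_chain_lengths[of \<Pi> Q]
    using finite_dep_chain_lengths[OF assms(1,2)] by (simp add: Suc_le_eq[symmetric])
qed

lemma finite_preds:
  assumes "finite \<Pi>"
  shows "finite (preds \<Pi>)"
proof -
  have "preds \<Pi> = (\<Union>r\<in>\<Pi>. pred ` atoms_rule r)"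
    unfolding preds_def by auto
  then show ?thesis
    using assms by (simp add: atoms_rule_def)
qed

lemma rank_le_rank_prog: "finite \<Pi> \<Longrightarrow> Q \<in> preds \<Pi> \<Longrightarrow> rank \<Pi> Q \<le> rank_prog \<Pi>"
  unfolding rank_prog_def by (simp add: finite_preds)

lemma rank_prog_le_card:
  assumes "finite \<Pi>" and "acyclic (deps \<Pi>)" and "preds \<Pi> \<noteq> {}"
  shows "rank_prog \<Pi> \<le> card \<Pi>"
  using assms rank_le_card[OF assms(1,2)] unfolding rank_prog_def by (simp add: finite_preds)

lemma rule_radius_le_max_radius: "finite \<Pi> \<Longrightarrow> r \<in> \<Pi> \<Longrightarrow> rule_radius r \<le> max_radius \<Pi>"
  unfolding max_radius_def by simp

lemma delta_diff_le_rule_radius: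
  assumes "tvars_rule r \<noteq> {}" and "b \<in> set (body r)" and "has_time b"
  shows "nat \<bar>delta (last (args (head r))) - delta (last (args b))\<bar> \<le> rule_radius r"
proof -
  let ?d = "\<lambda>b. nat \<bar>delta (last (args (head r))) - delta (last (args b))\<bar>"
  have "{?d b | b. b \<in> set (body r) \<and> has_time b} \<subseteq> ?d ` set (body r)"
    by auto
  then have "finite {?d b | b. b \<in> set (body r) \<and> has_time b}"
    by (rule finite_subset) simp
  then have "?d b \<le> Max (insert 0 {?d b | b. b \<in> set (body r) \<and> has_time b})"
    using assms(2,3) by (intro Max_ge) auto
  then show ?thesis
    unfolding rule_radius_def using assms(1) by simp
qed

lemma finite_time_points:
  fixes \<Pi> :: "('p,'o,'v) rule set"
  assumes "finite \<Pi>"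
  shows "finite (time_points \<Pi>)"
proof -
  have "time_points \<Pi> = (\<Union>r\<in>\<Pi>. \<Union>a\<in>atoms_rule r. TC -` set (args a))"
    unfolding time_points_def by auto
  moreover have "finite (TC -` set (args a))" for a :: "('p,'o,'v) atom"
    by (rule finite_vimageI) (auto simp: inj_def)
  ultimately show ?thesis
    using assms by (simp add: atoms_rule_def)
qed

lemma time_point_le_Max:
  "finite \<Pi> \<Longrightarrow> i \<in> time_points \<Pi> \<Longrightarrow> i \<le> Max (insert \<tau> (time_points \<Pi>))"
  by (simp add: finite_time_points)

lemma wf_atom_time_arg_last:
  assumes "wf_atom srt a" and "y \<in> set (args a)" and "tm_sort y = STime"
  shows "y = last (args a)"
proof -
  have sorts: "map tm_sort (args a) = srt (pred a)"
    using assms(1) unfolding wf_atom_def by simp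
  obtain xs z where args: "args a = xs @ [z]"
    using assms(2) by (metis append_butlast_last_id empty_iff list.set(1))
  have "STime \<in> set (srt (pred a))"
    using sorts assms(2,3) by (metis image_eqI list.set_map)
  then have "temporal srt (pred a)"
    using assms(1) unfolding wf_atom_def rigid_def by auto
  moreover have "butlast (srt (pred a)) = map tm_sort xs"
    using sorts args by (metis butlast_snoc map_append list.simps(8,9))
  ultimately have "tm_sort x = SObj" if "x \<in> set xs" for x
    using that unfolding temporal_def by auto
  then show ?thesis
    using assms(2,3) args by auto
qed

lemma wf_atom_tvar_in_last:
  assumes "wf_atom srt a" and "v \<in> tvars_atom a"
  shows "v \<in> tvars_tm (last (args a))"
proof -
  obtain y where y: "y \<in> set (args a)" "v \<in> tvars_tm y"
    using assms(2) unfolding tvars_atom_def by blast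
  have "tm_sort y = STime" using y(2) by (cases y) auto
  then show ?thesis
    using wf_atom_time_arg_last[OF assms(1) y(1)] y(2) by simp
qed

lemma eval_tm_of_tvar: "v \<in> tvars_tm x \<Longrightarrow> eval_tm vo vt x = VT (vt v + delta x)"
  by (cases x) auto

lemma last_eval_atom:
  "args a \<noteq> [] \<Longrightarrow> last (snd (eval_atom vo vt a)) = eval_tm vo vt (last (args a))"
  by (simp add: eval_atom_def last_map)

text \<open>The guard \<open>snd g \<noteq> []\<close> is needed because \<open>last []\<close> is an unspecified value.\<close>

definition time_bounded :: "('p \<Rightarrow> int) \<Rightarrow> ('p,'o) gatom \<Rightarrow> bool" where
  "time_bounded \<beta> g \<longleftrightarrow> (\<forall>t. snd g \<noteq> [] \<longrightarrow> last (snd g) = VT t \<longrightarrow> t \<le> \<beta> (fst g))"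

definition propagates_time_bound :: "('p \<Rightarrow> int) \<Rightarrow> ('p,'o,'v) rule \<Rightarrow> bool" where
  "propagates_time_bound \<beta> r \<longleftrightarrow> (\<forall>vo vt. time_bounded \<beta> (eval_atom vo vt (head r))
      \<longrightarrow> (\<forall>b\<in>set (body r). time_bounded \<beta> (eval_atom vo vt b)))"

lemma connected_rule_propagates_time_bound:
  assumes wf: "wf_rule srt idb r" and conn: "connected_rule r"
    and shift: "\<And>b. b \<in> set (body r) \<Longrightarrow> \<beta> (pred (head r)) + int (rule_radius r) \<le> \<beta> (pred b)"
    and constants: "\<And>b i. b \<in> set (body r) \<Longrightarrow> TC i \<in> set (args b) \<Longrightarrow> i \<le> \<beta> (pred b)"
  shows "propagates_time_bound \<beta> r"
  unfolding propagates_time_bound_def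
proof (intro allI impI ballI)
  fix vo vt b
  assume head_bd: "time_bounded \<beta> (eval_atom vo vt (head r))" and b: "b \<in> set (body r)"
  show "time_bounded \<beta> (eval_atom vo vt b)"
    unfolding time_bounded_def
  proof (intro allI impI)
    fix t assume ne: "snd (eval_atom vo vt b) \<noteq> []"
      and t: "last (snd (eval_atom vo vt b)) = VT t"
    define x where "x = last (args b)"
    have ne_b: "args b \<noteq> []" using ne by (simp add: eval_atom_def)
    then have x_in: "x \<in> set (args b)" by (simp add: x_def)
    have t_eval: "eval_tm vo vt x = VT t"
      using t last_eval_atom[OF ne_b] by (simp add: x_def)
    have "t \<le> \<beta> (pred b)" if v: "v \<in> tvars_tm x" for v
    proof -
      define y where "y = last (args (head r))"
      have "v \<in> tvars_atom b" using v x_in unfolding tvars_atom_def by blast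
      then have "v \<in> tvars_atom (head r)"
        using conn b unfolding connected_rule_def by blast
      moreover have "wf_atom srt (head r)"
        using wf unfolding wf_rule_def atoms_rule_def by simp
      ultimately have v_y: "v \<in> tvars_tm y"
        unfolding y_def by (rule wf_atom_tvar_in_last[rotated])
      have ne_h: "args (head r) \<noteq> []"
        using \<open>v \<in> tvars_atom (head r)\<close> by (auto simp: tvars_atom_def)
      have "vt v + delta y \<le> \<beta> (pred (head r))"
        using head_bd last_eval_atom[OF ne_h] eval_tm_of_tvar[OF v_y] ne_h
        by (simp add: time_bounded_def eval_atom_def y_def)
      moreover have "tvars_rule r \<noteq> {}"
        using \<open>v \<in> tvars_atom (head r)\<close> unfolding tvars_rule_def atoms_rule_def by blast
      then have "nat \<bar>delta y - delta x\<bar> \<le> rule_radius r"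
        using delta_diff_le_rule_radius[OF _ b] v ne_b
        by (cases x) (auto simp: has_time_def x_def y_def)
      moreover have "t = vt v + delta x"
        using t_eval eval_tm_of_tvar[OF v] by simp
      ultimately show ?thesis using shift[OF b] by linarith
    qed
    then show "t \<le> \<beta> (fst (eval_atom vo vt b))"
      using t_eval constants[OF b] x_in by (cases x) (auto simp: eval_atom_def)
  qed
qed

lemma entails_mono: "entails \<Pi> D \<alpha> \<Longrightarrow> D \<subseteq> D2 \<Longrightarrow> entails \<Pi> D2 \<alpha>"
  unfolding entails_def by blast

lemma entails_from_time_bounded_facts:
  assumes propagates: "\<forall>r\<in>\<Pi>. propagates_time_bound \<beta> r"
    and entails: "entails \<Pi> D \<alpha>" and bounded: "time_bounded \<beta> \<alpha>"
  shows "entails \<Pi> {f \<in> D. time_bounded \<beta> f} \<alpha>"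
  unfolding entails_def
proof (intro allI impI)
  fix J assume J: "\<forall>r\<in>\<Pi>. sat_rule J r" and D_J: "{f \<in> D. time_bounded \<beta> f} \<subseteq> J"
  define I where "I = {g. time_bounded \<beta> g \<longrightarrow> g \<in> J}"
  have "sat_rule I r" if r: "r \<in> \<Pi>" for r
    unfolding sat_rule_def
  proof (intro allI impI)
    fix vo vt assume "\<forall>b\<in>set (body r). eval_atom vo vt b \<in> I"
    then show "eval_atom vo vt (head r) \<in> I"
      using propagates r J unfolding I_def propagates_time_bound_def sat_rule_def by blast
  qed
  moreover have "D \<subseteq> I" using D_J unfolding I_def by blast
  ultimately have "\<alpha> \<in> I" using entails unfolding entails_def by blast
  then show "\<alpha> \<in> J" using bounded unfolding I_def by blast
qed

lemma time_bounded_facts_subset_restrict_ds: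
  assumes "dataset srt idb D" and "\<And>p. \<beta> p \<le> bound"
  shows "{f \<in> D. time_bounded \<beta> f} \<subseteq> restrict_ds srt D bound"
proof
  fix f assume f: "f \<in> {f \<in> D. time_bounded \<beta> f}"
  then have "fact srt f" using assms(1) unfolding dataset_def by blast
  then have sorts: "map val_sort (snd f) = srt (fst f)"
    and kind: "rigid srt (fst f) \<or> temporal srt (fst f)"
    unfolding fact_def by auto
  show "f \<in> restrict_ds srt D bound"
  proof (cases "rigid srt (fst f)")
    case False
    then have tmp: "temporal srt (fst f)" using kind by simp
    then have ne: "snd f \<noteq> []" using sorts unfolding temporal_def by auto
    then have "val_sort (last (snd f)) = STime"
      using sorts tmp by (metis last_map temporal_def)
    then obtain t where t: "last (snd f) = VT t" by (cases "last (snd f)") auto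
    then have "t \<le> bound"
      using f ne assms(2)[of "fst f"] unfolding time_bounded_def by fastforce
    then show ?thesis using f tmp t unfolding restrict_ds_def by auto
  qed (use f in \<open>auto simp: restrict_ds_def\<close>)
qed

definition rank_time_bound :: "('p,'o,'v) rule set \<Rightarrow> int \<Rightarrow> 'p \<Rightarrow> int" where
  "rank_time_bound \<Pi> \<tau>\<^sub>0 P = \<tau>\<^sub>0 + int (max_radius \<Pi>) * (int (rank_prog \<Pi>) - int (rank \<Pi> P))"

lemma rank_time_bound_propagates:
  assumes prog: "program srt idb \<Pi>" and acyc: "acyclic (deps \<Pi>)"
    and conn: "connected_rule r" and r: "r \<in> \<Pi>"
    and time_points_le: "\<And>i. i \<in> time_points \<Pi> \<Longrightarrow> i \<le> \<tau>\<^sub>0"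
  shows "propagates_time_bound (rank_time_bound \<Pi> \<tau>\<^sub>0) r"
proof -
  have fin: "finite \<Pi>" and wf: "wf_rule srt idb r"
    using prog r unfolding program_def by auto
  let ?a = "int (max_radius \<Pi>)"
  have rank_bound: "rank \<Pi> (pred b) \<le> rank_prog \<Pi>" if "b \<in> set (body r)" for b
    using that r fin by (intro rank_le_rank_prog) (auto simp: preds_def atoms_rule_def)
  show ?thesis
  proof (rule connected_rule_propagates_time_bound[OF wf conn])
    fix b assume b: "b \<in> set (body r)"
    have "(pred (head r), pred b) \<in> deps \<Pi>" using r b unfolding deps_def by blast
    then have "?a * 1 \<le> ?a * (int (rank \<Pi> (pred (head r))) - int (rank \<Pi> (pred b)))"
      using rank_less_of_deps[OF fin acyc] by (intro mult_left_mono) fastforce+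
    moreover have "rank_time_bound \<Pi> \<tau>\<^sub>0 (pred b) - rank_time_bound \<Pi> \<tau>\<^sub>0 (pred (head r))
        = ?a * (int (rank \<Pi> (pred (head r))) - int (rank \<Pi> (pred b)))"
      unfolding rank_time_bound_def by (simp add: algebra_simps)
    ultimately show "rank_time_bound \<Pi> \<tau>\<^sub>0 (pred (head r)) + int (rule_radius r)
        \<le> rank_time_bound \<Pi> \<tau>\<^sub>0 (pred b)"
      using rule_radius_le_max_radius[OF fin r] by linarith
  next
    fix b i assume "b \<in> set (body r)" "TC i \<in> set (args b)"
    then have "i \<le> \<tau>\<^sub>0" "rank \<Pi> (pred b) \<le> rank_prog \<Pi>"
      using r rank_bound time_points_le by (auto simp: time_points_def atoms_rule_def)
    moreover have "0 \<le> ?a * (int (rank_prog \<Pi>) - int (rank \<Pi> (pred b)))"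
      using calculation(2) by (intro mult_nonneg_nonneg) auto
    ultimately show "i \<le> rank_time_bound \<Pi> \<tau>\<^sub>0 (pred b)"
      unfolding rank_time_bound_def by linarith
  qed
qed

lemma rank_time_bound_le_rad:
  assumes "finite \<Pi>" and "acyclic (deps \<Pi>)" and "preds \<Pi> \<noteq> {}"
  shows "rank_time_bound \<Pi> \<tau>\<^sub>0 P \<le> \<tau>\<^sub>0 + int (rad \<Pi>)"
proof -
  have "int (max_radius \<Pi>) * (int (rank_prog \<Pi>) - int (rank \<Pi> P))
      \<le> int (max_radius \<Pi>) * int (card \<Pi>)"
    using rank_prog_le_card[OF assms] by (intro mult_left_mono) auto
  then show ?thesis
    unfolding rank_time_bound_def rad_def by (simp add: mult.commute)
qed

theorem mainTheorem11:
  fixes srt :: "'p \<Rightarrow> sort list" and idb :: "'p \<Rightarrow> bool"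
    and PQ :: 'p and \<Pi> :: "('p,'o,'v) rule set"
    and \<tau>a :: int and D' :: "('p,'o) gatom set" and P :: 'p and os :: "'o list" and \<tau> :: int
  assumes "query srt idb PQ \<Pi>"
    and "nonrecursive \<Pi>"
    and "\<forall>r\<in>\<Pi>. connected_rule r"
    and "dataset srt idb D'"
    and "srt P = replicate (length os) SObj @ [STime]"
    and "\<tau> \<le> Max (insert \<tau>a (time_points \<Pi>))
              + int (max_radius \<Pi>) * (int (rank_prog \<Pi>) - int (rank \<Pi> P))"
    and "entails \<Pi> D' (P, map VO os @ [VT \<tau>])"
  shows "entails \<Pi> (restrict_ds srt D' (Max (insert \<tau>a (time_points \<Pi>)) + int (rad \<Pi>)))
           (P, map VO os @ [VT \<tau>])"
proof -
  define \<tau>\<^sub>0 where "\<tau>\<^sub>0 = Max (insert \<tau>a (time_points \<Pi>))"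
  let ?\<beta> = "rank_time_bound \<Pi> \<tau>\<^sub>0"
  have prog: "program srt idb \<Pi>" and "preds \<Pi> \<noteq> {}"
    using assms(1) unfolding query_def by auto
  have fin: "finite \<Pi>" using prog unfolding program_def by simp
  have acyc: "acyclic (deps \<Pi>)" using assms(2) unfolding nonrecursive_def .
  have "\<forall>r\<in>\<Pi>. propagates_time_bound ?\<beta> r"
    using rank_time_bound_propagates[OF prog acyc] assms(3) time_point_le_Max[OF fin]
    unfolding \<tau>\<^sub>0_def by blast
  moreover have "time_bounded ?\<beta> (P, map VO os @ [VT \<tau>])"
    using assms(6) unfolding time_bounded_def rank_time_bound_def \<tau>\<^sub>0_def by simp
  ultimately have "entails \<Pi> {f \<in> D'. time_bounded ?\<beta> f} (P, map VO os @ [VT \<tau>])"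
    using entails_from_time_bounded_facts assms(7) by blast
  moreover have "{f \<in> D'. time_bounded ?\<beta> f} \<subseteq> restrict_ds srt D' (\<tau>\<^sub>0 + int (rad \<Pi>))"
    using time_bounded_facts_subset_restrict_ds[OF assms(4)]
      rank_time_bound_le_rad[OF fin acyc \<open>preds \<Pi> \<noteq> {}\<close>] by blast
  ultimately show ?thesis
    unfolding \<tau>\<^sub>0_def by (rule entails_mono)
qed

end
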